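(* Let $p\ge 2$ and let $J$ be a periodic Jacobi operator on $\ell^2(\mathbb{Z})$ with period $p$, given by $(J\psi)_n=a_{n-1}\psi_{n-1}+b_n\psi_n+a_n\psi_{n+1}$, where $a_n>0$, $b_n\in\mathbb{R}$, $a_{n+p}=a_n$, $b_{n+p}=b_n$ for all $n$. Let $A:=(a_1\cdots a_p)^{1/p}$, and let $\sigma_n$ ($1\le n\le p$) and $\gamma_n$ ($1\le n\le p-1$) be the spectral bands and gaps of $J$. If $$4\min_{1\le n\le p-1}|\gamma_n|\ge\max\Big\{\max_{1\le n\le p}|\sigma_n|,\;4A\Big\},$$ then $$\min_{1\le n\le p}|\sigma_n|\le\frac{4A^p}{\big(\min_{1\le n\le p-1}|\gamma_n|\big)^{p-1}}.$$
   Context: Spectral structure: the spectrum of $J$ is $\sigma(J)=\{\lambda\in\mathbb{R}: |\Delta(\lambda)|\le 2\}$, where $\Delta(\lambda)=\operatorname{tr}\big(A_p(\lambda)A_{p-1}(\lambda)\cdots A_1(\lambda)\big)$ with $A_n(\lambda)=\begin{pmatrix}(\lambda-b_n)/a_n & -a_{n-1}/a_n\\ 1&0\end{pmatrix}$ (the discriminant, a real polynomial of degree $p$). It is a standard fact that this set is a union of $p$ closed intervals (bands) $\sigma_n=[\lambda_n^{\min},\lambda_n^{\max}]$, $1\le n\le p$, with $\lambda_n^{\min}<\lambda_n^{\max}\le\lambda_{n+1}^{\min}$ (bands may touch but do not overlap); on each band $\Delta$ is monotone and maps it onto $[-2,2]$. The spectral gaps are $\gamma_n=(\lambda_n^{\max},\lambda_{n+1}^{\min})$,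 $1\le n\le p-1$ (possibly empty). $|\cdot|$ denotes Lebesgue measure (length). *)

theory Defs
  imports "HOL-Analysis.Analysis"
begin

definition transfer :: "(int \<Rightarrow> real) \<Rightarrow> (int \<Rightarrow> real) \<Rightarrow> int \<Rightarrow> real \<Rightarrow> real^2^2" where
  "transfer a b n lam =
     vector [vector [(lam - b n) / a n, - a (n - 1) / a n], vector [1, 0]]"

fun monodromy :: "(int \<Rightarrow> real) \<Rightarrow> (int \<Rightarrow> real) \<Rightarrow> nat \<Rightarrow> real \<Rightarrow> real^2^2" where
  "monodromy a b 0 lam = mat 1"
| "monodromy a b (Suc k) lam = transfer a b (int (Suc k)) lam ** monodromy a b k lam"

definition discriminant :: "(int \<Rightarrow> real) \<Rightarrow> (int \<Rightarrow> real) \<Rightarrow> nat \<Rightarrow> real \<Rightarrow> real" where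
  "discriminant a b p lam = monodromy a b p lam $ 1 $ 1 + monodromy a b p lam $ 2 $ 2"

definition jacobi_spectrum :: "(int \<Rightarrow> real) \<Rightarrow> (int \<Rightarrow> real) \<Rightarrow> nat \<Rightarrow> real set" where
  "jacobi_spectrum a b p = {lam. \<bar>discriminant a b p lam\<bar> \<le> 2}"

text \<open>This characterizes the bands uniquely.\<close>
definition band_edges :: "(int \<Rightarrow> real) \<Rightarrow> (int \<Rightarrow> real) \<Rightarrow> nat \<Rightarrow> (nat \<Rightarrow> real) \<Rightarrow> (nat \<Rightarrow> real) \<Rightarrow> bool" where
  "band_edges a b p lmin lmax \<longleftrightarrow>
     (\<forall>n\<in>{1..p}. lmin n < lmax n) \<and>
     (\<forall>n\<in>{1..<p}. lmax n \<le> lmin (Suc n)) \<and>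
     jacobi_spectrum a b p = (\<Union>n\<in>{1..p}. {lmin n..lmax n}) \<and>
     (\<forall>n\<in>{1..p}. (mono_on {lmin n..lmax n} (discriminant a b p) \<or>
                   antimono_on {lmin n..lmax n} (discriminant a b p)) \<and>
                  discriminant a b p ` {lmin n..lmax n} = {-2..2})"

definition band_len :: "(nat \<Rightarrow> real) \<Rightarrow> (nat \<Rightarrow> real) \<Rightarrow> nat \<Rightarrow> real" where
  "band_len lmin lmax n = lmax n - lmin n"

definition gap_len :: "(nat \<Rightarrow> real) \<Rightarrow> (nat \<Rightarrow> real) \<Rightarrow> nat \<Rightarrow> real" where
  "gap_len lmin lmax n = lmin (Suc n) - lmax n"

definition geo_A :: "(int \<Rightarrow> real) \<Rightarrow> nat \<Rightarrow> real" where
  "geo_A a p = (\<Prod>n=1..p. a (int n)) powr (1 / real p)"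

end

theory Submission imports Defs "HOL-Computational_Algebra.Polynomial" begin

text \<open>The discriminant is a real polynomial of degree p with leading coefficient
  1 / (a_1 ... a_p) = A^-p. Each band is mapped monotonically onto [-2, 2], so it contains a
  zero z_n of the discriminant, and these p zeros are all its roots:
  Delta(x) = A^-p (x - z_1) ... (x - z_p). At an edge x of the first band |Delta(x)| = 2, while
  |x - z_n| >= g for n >= 2, where g is the smallest gap length. Hence |x - z_1| <= 2 A^p / g^(p-1),
  and the first band has length at most 4 A^p / g^(p-1). The hypothesis on the gaps is only
  needed to ensure g > 0.\<close>

definition transfer_poly :: "(int \<Rightarrow> real) \<Rightarrow> (int \<Rightarrow> real) \<Rightarrow> int \<Rightarrow> real poly^2^2" where
  "transfer_poly a b n =
     vector [vector [[:- b n / a n, 1 / a n:], [:- a (n - 1) / a n:]], vector [1, 0]]"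

fun monodromy_poly :: "(int \<Rightarrow> real) \<Rightarrow> (int \<Rightarrow> real) \<Rightarrow> nat \<Rightarrow> real poly^2^2" where
  "monodromy_poly a b 0 = mat 1"
| "monodromy_poly a b (Suc k) = transfer_poly a b (int (Suc k)) ** monodromy_poly a b k"

lemma poly_monodromy_poly:
  assumes "\<forall>n. a n > 0"
  shows "poly (monodromy_poly a b k $ i $ j) lam = monodromy a b k lam $ i $ j"
proof (induction k arbitrary: i j)
  case 0
  show ?case by (auto simp: mat_def)
next
  case (Suc k)
  have "a (int (Suc k)) \<noteq> 0" using assms by (metis less_irrefl)
  with Suc show ?case
    using exhaust_2[of i] exhaust_2[of j]
    by (auto simp: matrix_matrix_mult_def sum_2 transfer_def transfer_poly_def field_simps)
qed

lemma monodromy_poly_Suc_entries: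
  fixes a b :: "int \<Rightarrow> real" and k :: nat
  defines "L \<equiv> [:- b (int (Suc k)) / a (int (Suc k)), 1 / a (int (Suc k)):]"
    and "c \<equiv> [:- a (int k) / a (int (Suc k)):]"
  shows "monodromy_poly a b (Suc k) $ 1 $ 1 = L * monodromy_poly a b k $ 1 $ 1 + c * monodromy_poly a b k $ 2 $ 1"
    "monodromy_poly a b (Suc k) $ 1 $ 2 = L * monodromy_poly a b k $ 1 $ 2 + c * monodromy_poly a b k $ 2 $ 2"
    "monodromy_poly a b (Suc k) $ 2 $ 1 = monodromy_poly a b k $ 1 $ 1"
    "monodromy_poly a b (Suc k) $ 2 $ 2 = monodromy_poly a b k $ 1 $ 2"
  by (simp_all add: L_def c_def matrix_matrix_mult_def sum_2 transfer_poly_def)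

text \<open>The induction starts at 1: at k = 0 the truncated bound k - 1 = 0 would not exclude a
  nonzero constant (1,2) entry, and the bound would fail to propagate.\<close>

lemma degree_monodromy_poly:
  fixes a b :: "int \<Rightarrow> real"
  assumes apos: "\<forall>n. a n > 0" and "k \<ge> 1"
  shows "degree (monodromy_poly a b k $ 1 $ 1) = k
    \<and> lead_coeff (monodromy_poly a b k $ 1 $ 1) = 1 / (\<Prod>i=1..k. a (int i))
    \<and> degree (monodromy_poly a b k $ 1 $ 2) \<le> k - 1
    \<and> degree (monodromy_poly a b k $ 2 $ 1) \<le> k - 1
    \<and> degree (monodromy_poly a b k $ 2 $ 2) \<le> k - 1"
  using \<open>k \<ge> 1\<close>
proof (induction k rule: nat_induct_at_least)
  case base
  have "a 1 \<noteq> 0" using apos by (metis less_irrefl)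
  then show ?case
    by (simp add: matrix_matrix_mult_def sum_2 transfer_poly_def mat_def)
next
  case (Suc k)
  define M where "M = monodromy_poly a b k"
  define L where "L = [:- b (int (Suc k)) / a (int (Suc k)), 1 / a (int (Suc k)):]"
  define c where "c = [:- a (int k) / a (int (Suc k)):]"
  have IH: "degree (M $ 1 $ 1) = k" "lead_coeff (M $ 1 $ 1) = 1 / (\<Prod>i=1..k. a (int i))"
    "degree (M $ 1 $ 2) \<le> k - 1" "degree (M $ 2 $ 1) \<le> k - 1" "degree (M $ 2 $ 2) \<le> k - 1"
    using Suc.IH unfolding M_def by blast+
  have "a (int (Suc k)) \<noteq> 0" using apos by (metis less_irrefl)
  then have L: "degree L = 1" "lead_coeff L = 1 / a (int (Suc k))" "L \<noteq> 0"
    by (simp_all add: L_def)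
  have c: "degree (c * q) \<le> degree q" for q
    using degree_mult_le[of c q] by (simp add: c_def)
  have "M $ 1 $ 1 \<noteq> 0" using IH(1) \<open>k \<ge> 1\<close> by auto
  then have LM11: "degree (L * M $ 1 $ 1) = Suc k"
    using IH(1) L by (simp add: degree_mult_eq)
  have cM21: "degree (c * M $ 2 $ 1) < Suc k"
    using IH(4) c[of "M $ 2 $ 1"] by simp
  have "degree (L * M $ 1 $ 2 + c * M $ 2 $ 2) \<le> k"
    using degree_mult_le[of L "M $ 1 $ 2"] IH(3,5) L(1) \<open>k \<ge> 1\<close> c[of "M $ 2 $ 2"]
    by (intro degree_add_le) simp_all
  moreover have "lead_coeff (L * M $ 1 $ 1 + c * M $ 2 $ 1) = lead_coeff (L * M $ 1 $ 1)"
    using LM11 cM21 by (metis add.commute lead_coeff_add_le)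
  moreover have "\<dots> = 1 / (\<Prod>i=1..Suc k. a (int i))"
    using IH(2) L(2) by (simp add: lead_coeff_mult prod.cl_ivl_Suc)
  ultimately show ?case
    using IH LM11 cM21
    unfolding monodromy_poly_Suc_entries M_def[symmetric] L_def[symmetric] c_def[symmetric]
    by (simp add: degree_add_eq_left)
qed

definition discriminant_poly :: "(int \<Rightarrow> real) \<Rightarrow> (int \<Rightarrow> real) \<Rightarrow> nat \<Rightarrow> real poly" where
  "discriminant_poly a b p = monodromy_poly a b p $ 1 $ 1 + monodromy_poly a b p $ 2 $ 2"

lemma poly_discriminant_poly:
  "\<forall>n. a n > 0 \<Longrightarrow> poly (discriminant_poly a b p) lam = discriminant a b p lam"
  by (simp add: discriminant_poly_def discriminant_def poly_monodromy_poly)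

lemma degree_discriminant_poly:
  assumes "\<forall>n. a n > 0" and "p \<ge> 1"
  shows "degree (discriminant_poly a b p) = p"
    and "lead_coeff (discriminant_poly a b p) = 1 / (\<Prod>i=1..p. a (int i))"
proof -
  have M: "degree (monodromy_poly a b p $ 1 $ 1) = p"
    "lead_coeff (monodromy_poly a b p $ 1 $ 1) = 1 / (\<Prod>i=1..p. a (int i))"
    "degree (monodromy_poly a b p $ 2 $ 2) < degree (monodromy_poly a b p $ 1 $ 1)"
    using degree_monodromy_poly[OF assms, of b] \<open>p \<ge> 1\<close> by auto
  show "degree (discriminant_poly a b p) = p"
    using M by (metis discriminant_poly_def add.commute degree_add_eq_right)
  show "lead_coeff (discriminant_poly a b p) = 1 / (\<Prod>i=1..p. a (int i))"
    using M by (metis discriminant_poly_def add.commute lead_coeff_add_le)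
qed

lemma poly_eq_lead_coeff_prod_roots:
  fixes P :: "'a::idom poly"
  assumes "finite S" "card S = degree P" "\<forall>z\<in>S. poly P z = 0" "P \<noteq> 0"
  shows "poly P x = lead_coeff P * (\<Prod>z\<in>S. x - z)"
  using assms
proof (induction S arbitrary: P rule: finite_induct)
  case empty
  then obtain c where "P = [:c:]" by (metis degree_eq_zeroE card.empty)
  then show ?case by simp
next
  case (insert z S)
  have "[:-z, 1:] dvd P" using insert.prems by (simp add: poly_eq_0_iff_dvd)
  then obtain Q where PQ: "P = [:-z, 1:] * Q" by (elim dvdE)
  have "Q \<noteq> 0" using PQ insert.prems by auto
  then have "degree P = degree Q + 1"
    using degree_mult_eq[of "[:-z, 1:]" Q] by (simp add: PQ del: mult_pCons_left)
  moreover have lead: "lead_coeff P = lead_coeff Q"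
    using lead_coeff_mult[of "[:-z, 1:]" Q] by (simp add: PQ del: mult_pCons_left)
  moreover have "\<forall>w\<in>S. poly Q w = 0"
    using insert PQ by auto
  ultimately have "poly Q x = lead_coeff Q * (\<Prod>w\<in>S. x - w)"
    using insert \<open>Q \<noteq> 0\<close> by simp
  moreover have "poly P x = (x - z) * poly Q x"
    by (simp add: PQ algebra_simps)
  ultimately show ?case
    using insert lead by (simp add: algebra_simps)
qed

lemma lead_coeff_dist_root_le:
  fixes P :: "real poly"
  assumes "finite S" "card S = degree P" "\<forall>w\<in>S. poly P w = 0" "P \<noteq> 0"
    and "z \<in> S" "\<forall>w\<in>S - {z}. g \<le> \<bar>x - w\<bar>" "g \<ge> 0"
  shows "\<bar>lead_coeff P\<bar> * g ^ (degree P - 1) * \<bar>x - z\<bar> \<le> \<bar>poly P x\<bar>"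
proof -
  have "g ^ (degree P - 1) = (\<Prod>w\<in>S - {z}. g)"
    using assms(1,2,5) by (simp add: card_Diff_singleton)
  also have "\<dots> \<le> (\<Prod>w\<in>S - {z}. \<bar>x - w\<bar>)"
    using assms(6,7) by (intro prod_mono) auto
  finally have "\<bar>lead_coeff P\<bar> * g ^ (degree P - 1) * \<bar>x - z\<bar>
      \<le> \<bar>lead_coeff P\<bar> * (\<Prod>w\<in>S - {z}. \<bar>x - w\<bar>) * \<bar>x - z\<bar>"
    by (intro mult_right_mono mult_left_mono) auto
  also have "\<dots> = \<bar>poly P x\<bar>"
    using assms(1-5) poly_eq_lead_coeff_prod_roots[of S P x]
    by (simp add: prod.remove[of S z] abs_mult abs_prod)
  finally show ?thesis .
qed

lemma monotone_onto_interval_endpoints: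
  fixes f :: "real \<Rightarrow> real"
  assumes "mono_on {l..u} f \<or> antimono_on {l..u} f" "f ` {l..u} = {c..d}" "l \<le> u"
  shows "f l \<in> {c, d}" "f u \<in> {c, d}"
proof -
  have "c \<le> d" using assms(2,3) by (metis atLeastatMost_empty_iff2 image_is_empty)
  then obtain yc yd where yc: "yc \<in> {l..u}" "f yc = c" and yd: "yd \<in> {l..u}" "f yd = d"
    using assms(2) by (metis atLeastAtMost_iff imageE order.refl)
  have ends: "l \<in> {l..u}" "u \<in> {l..u}" "f l \<in> {c..d}" "f u \<in> {c..d}"
    using assms(2,3) by auto
  from assms(1) have "f l \<in> {c, d} \<and> f u \<in> {c, d}"
  proof
    assume "mono_on {l..u} f"
    then have "f l \<le> f yc" "f yd \<le> f u"
      using yc(1) yd(1) ends(1,2) by (auto intro: mono_onD)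
    then show ?thesis using ends(3,4) yc(2) yd(2) by auto
  next
    assume "antimono_on {l..u} f"
    then have "f yd \<le> f l" "f u \<le> f yc"
      using yc(1) yd(1) ends(1,2) by (auto intro: monotone_onD)
    then show ?thesis using ends(3,4) yc(2) yd(2) by auto
  qed
  then show "f l \<in> {c, d}" "f u \<in> {c, d}" by auto
qed

lemma band_edges_lmax_add_gap_le:
  assumes "band_edges a b p lmin lmax" "\<forall>j\<in>{1..<p}. g \<le> gap_len lmin lmax j"
    and "1 \<le> j" "j < k" "k \<le> p"
  shows "lmax j + g \<le> lmin k"
proof -
  from \<open>j < k\<close> have "Suc j \<le> k" by simp
  then show ?thesis using \<open>k \<le> p\<close>
  proof (induction k rule: dec_induct)
    case base
    then have "j \<in> {1..<p}" using assms(3) by simp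
    then show ?case using assms(2) by (force simp: gap_len_def)
  next
    case (step k)
    then have "lmin k < lmax k" "lmax k \<le> lmin (Suc k)"
      using assms(1,3) by (auto simp: band_edges_def)
    then show ?case using step by simp
  qed
qed

lemma first_band_length_le:
  assumes apos: "\<forall>n. a n > 0" and "p \<ge> 1" and bands: "band_edges a b p lmin lmax"
    and "g > 0" and gaps: "\<forall>j\<in>{1..<p}. g \<le> gap_len lmin lmax j"
  shows "band_len lmin lmax 1 \<le> 4 * (\<Prod>n=1..p. a (int n)) / g ^ (p - 1)"
proof -
  define D where "D = discriminant_poly a b p"
  define Pa where "Pa = (\<Prod>n=1..p. a (int n))"
  have "Pa > 0" using apos by (simp add: Pa_def prod_pos)
  have D: "degree D = p" "lead_coeff D = 1 / Pa" "\<And>x. poly D x = discriminant a b p x"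
    using degree_discriminant_poly[OF apos \<open>p \<ge> 1\<close>] poly_discriminant_poly[OF apos]
    by (simp_all add: D_def Pa_def)
  have band: "mono_on {lmin n..lmax n} (poly D) \<or> antimono_on {lmin n..lmax n} (poly D)"
    "poly D ` {lmin n..lmax n} = {-2..2}" "lmin n < lmax n" if "n \<in> {1..p}" for n
    using bands that by (simp_all add: band_edges_def D(3)[abs_def])
  have "\<exists>y\<in>{lmin n..lmax n}. poly D y = 0" if "n \<in> {1..p}" for n
  proof -
    have "0 \<in> poly D ` {lmin n..lmax n}" using band(2)[OF that] by simp
    then show ?thesis by (auto simp: image_iff)
  qed
  then obtain z where z: "\<And>n. n \<in> {1..p} \<Longrightarrow> z n \<in> {lmin n..lmax n} \<and> poly D (z n) = 0"
    by metis
  have "strict_mono_on {1..p} z"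
  proof (rule strict_mono_onI)
    fix j k assume jk: "j \<in> {1..p}" "k \<in> {1..p}" "j < k"
    then have "lmax j + g \<le> lmin k" using band_edges_lmax_add_gap_le[OF bands gaps] by simp
    moreover have "z j \<le> lmax j" "lmin k \<le> z k" using z jk(1,2) by auto
    ultimately show "z j < z k" using \<open>g > 0\<close> by linarith
  qed
  define S where "S = z ` {1..p}"
  have roots: "finite S" "card S = degree D" "\<forall>w\<in>S. poly D w = 0" "D \<noteq> 0" "z 1 \<in> S"
    using strict_mono_on_imp_inj_on[OF \<open>strict_mono_on {1..p} z\<close>] z \<open>p \<ge> 1\<close> D(1)
    by (auto simp: S_def card_image)
  have edge: "\<bar>x - z 1\<bar> \<le> 2 * Pa / g ^ (p - 1)"
    if x: "x \<in> {lmin 1..lmax 1}" "\<bar>poly D x\<bar> = 2" for x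
  proof -
    have "g \<le> \<bar>x - w\<bar>" if w: "w \<in> S - {z 1}" for w
    proof -
      obtain k where k: "k \<in> {1..p}" "k \<noteq> 1" "w = z k" using w unfolding S_def by blast
      then have "lmax 1 + g \<le> lmin k" using band_edges_lmax_add_gap_le[OF bands gaps] by simp
      moreover have "lmin k \<le> w" using z k by auto
      ultimately show ?thesis using x(1) by auto
    qed
    then have "\<bar>lead_coeff D\<bar> * g ^ (p - 1) * \<bar>x - z 1\<bar> \<le> 2"
      using lead_coeff_dist_root_le[OF roots, of g x] \<open>g > 0\<close> x(2) D(1) by simp
    then show ?thesis using \<open>Pa > 0\<close> \<open>g > 0\<close> by (simp add: D(2) field_simps)
  qed
  have "1 \<in> {1..p}" using \<open>p \<ge> 1\<close> by simp
  then have "lmin 1 < lmax 1" "z 1 \<in> {lmin 1..lmax 1}" using band(3) z by auto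
  moreover have "\<bar>poly D (lmin 1)\<bar> = 2" "\<bar>poly D (lmax 1)\<bar> = 2"
    using monotone_onto_interval_endpoints[OF band(1,2)[OF \<open>1 \<in> {1..p}\<close>]] \<open>lmin 1 < lmax 1\<close>
    by auto
  ultimately have "(lmax 1 - z 1) + (z 1 - lmin 1) \<le> 2 * Pa / g ^ (p - 1) + 2 * Pa / g ^ (p - 1)"
    using edge[of "lmin 1"] edge[of "lmax 1"] by (intro add_mono) auto
  then show ?thesis by (simp add: band_len_def Pa_def)
qed

lemma geo_A_pos_pow:
  assumes "\<forall>n. a n > 0" and "p \<ge> 1"
  shows "geo_A a p > 0" and "geo_A a p ^ p = (\<Prod>n=1..p. a (int n))"
proof -
  define P where "P = (\<Prod>n=1..p. a (int n))"
  have "P > 0" using assms(1) by (simp add: P_def prod_pos)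
  then show "geo_A a p > 0" unfolding geo_A_def P_def[symmetric] by simp
  then have "geo_A a p ^ p = geo_A a p powr real p" by (simp add: powr_realpow)
  also have "\<dots> = P powr (1 / real p * real p)" by (simp add: geo_A_def P_def powr_powr)
  also have "\<dots> = P" using assms(2) \<open>P > 0\<close> by simp
  finally show "geo_A a p ^ p = (\<Prod>n=1..p. a (int n))" by (simp add: P_def)
qed

theorem corollary1p4:
  fixes a b :: "int \<Rightarrow> real" and p :: nat and lmin lmax :: "nat \<Rightarrow> real"
  assumes "p \<ge> 2"
    and "\<forall>n. a n > 0"
    and "\<forall>n. a (n + int p) = a n"
    and "\<forall>n. b (n + int p) = b n"
    and "band_edges a b p lmin lmax"
    and "4 * Min (gap_len lmin lmax ` {1..p-1})
           \<ge> max (Max (band_len lmin lmax ` {1..p})) (4 * geo_A a p)"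
  shows "Min (band_len lmin lmax ` {1..p})
           \<le> 4 * geo_A a p ^ p / (Min (gap_len lmin lmax ` {1..p-1})) ^ (p - 1)"
proof -
  define g where "g = Min (gap_len lmin lmax ` {1..p-1})"
  have "p \<ge> 1" using assms(1) by simp
  have "g > 0" using geo_A_pos_pow(1)[OF assms(2) \<open>p \<ge> 1\<close>] assms(6) by (simp add: g_def)
  have gaps: "\<forall>j\<in>{1..<p}. g \<le> gap_len lmin lmax j"
    by (auto simp: g_def intro: Min_le)
  have "Min (band_len lmin lmax ` {1..p}) \<le> band_len lmin lmax 1"
    using \<open>p \<ge> 1\<close> by (intro Min_le) auto
  also have "\<dots> \<le> 4 * (\<Prod>n=1..p. a (int n)) / g ^ (p - 1)"
    using first_band_length_le[OF assms(2) \<open>p \<ge> 1\<close> assms(5) \<open>g > 0\<close> gaps] .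
  also have "\<dots> = 4 * geo_A a p ^ p / g ^ (p - 1)"
    using geo_A_pos_pow(2)[OF assms(2) \<open>p \<ge> 1\<close>] by simp
  finally show ?thesis unfolding g_def .
qed

end
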